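(* Let $A$ be a $K$-algebra with centre $Z(A)$ that admits a set of generators $\{a_i\mid i\in I\}$ such that, with $\Delta=\{\mathrm{ad}_{a_i}\mid i\in I\}\subseteq\mathrm{Der}_{Z(A)}(A)$, the algebra $A$ is $\Delta$-locally nilpotent. Then every nonzero ideal of $A$ has nonzero intersection with $Z(A)$.
   Context: $\mathrm{ad}_a(f)=af-fa$. For $i\ge1$, $\Delta^i=\{\delta_1\cdots\delta_i\mid\delta_j\in\Delta\}$; $N_\Delta(A)=\bigcup_{i\geq0}\{x\in A\mid\Delta^{i+1}x=0\}$. $A$ is $\Delta$-locally nilpotent if $A=N_\Delta(A)$. *)

theory Defs
  imports Main "HOL.Vector_Spaces"
begin

definition is_K_algebra :: "('k::field \<Rightarrow> 'a::ring_1 \<Rightarrow> 'a) \<Rightarrow> bool" where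
  "is_K_algebra scale \<longleftrightarrow> vector_space scale \<and>
     (\<forall>c x y. scale c (x * y) = scale c x * y \<and> scale c (x * y) = x * scale c y)"

inductive_set gen_subalg :: "('k \<Rightarrow> 'a::ring_1 \<Rightarrow> 'a) \<Rightarrow> 'a set \<Rightarrow> 'a set"
  for scale :: "'k \<Rightarrow> 'a \<Rightarrow> 'a" and S :: "'a set" where
  gen: "x \<in> S \<Longrightarrow> x \<in> gen_subalg scale S"
| one: "1 \<in> gen_subalg scale S"
| zero: "0 \<in> gen_subalg scale S"
| add: "x \<in> gen_subalg scale S \<Longrightarrow> y \<in> gen_subalg scale S \<Longrightarrow> x + y \<in> gen_subalg scale S"
| mult: "x \<in> gen_subalg scale S \<Longrightarrow> y \<in> gen_subalg scale S \<Longrightarrow> x * y \<in> gen_subalg scale S"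
| smult: "x \<in> gen_subalg scale S \<Longrightarrow> scale c x \<in> gen_subalg scale S"

definition centre :: "'a::ring_1 set" where
  "centre = {z. \<forall>x. z * x = x * z}"

text \<open>Two-sided ideal (K-linearity is automatic in a unital K-algebra).\<close>
definition two_sided_ideal :: "'a::ring_1 set \<Rightarrow> bool" where
  "two_sided_ideal J \<longleftrightarrow> 0 \<in> J \<and> (\<forall>x\<in>J. \<forall>y\<in>J. x + y \<in> J) \<and> (\<forall>x\<in>J. - x \<in> J)
     \<and> (\<forall>x\<in>J. \<forall>r. r * x \<in> J \<and> x * r \<in> J)"

definition ad :: "'a::ring \<Rightarrow> 'a \<Rightarrow> 'a" where
  "ad a f = a * f - f * a"

text \<open>Delta^k x = 0: every product of k elements of Delta annihilates x.\<close>
definition pow_annihilates :: "('a \<Rightarrow> 'a) set \<Rightarrow> nat \<Rightarrow> 'a::zero \<Rightarrow> bool" where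
  "pow_annihilates D k x \<longleftrightarrow>
     (\<forall>ds. length ds = k \<longrightarrow> set ds \<subseteq> D \<longrightarrow> foldr (\<circ>) ds id x = 0)"

definition locally_nilpotent :: "('a::zero \<Rightarrow> 'a) set \<Rightarrow> bool" where
  "locally_nilpotent D \<longleftrightarrow> (\<forall>x::'a. \<exists>i. pow_annihilates D (i + 1) x)"

end

theory Submission
  imports Defs
begin

text \<open>Take a nonzero x in the ideal. Iterated commutators with the generators stay in the
  ideal, and by local nilpotence some such iterate of x is nonzero while all further
  commutators with generators vanish. That iterate commutes with every generator, hence with
  the whole algebra they generate, so it is a nonzero central element of the ideal.\<close>

lemma is_K_algebra_scale_mult:
  assumes "is_K_algebra scale"
  shows "scale c (x * y) = scale c x * y" and "scale c (x * y) = x * scale c y"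
  using assms unfolding is_K_algebra_def by blast+

lemma gen_subalg_commute:
  assumes K: "is_K_algebra scale" and z: "z \<in> gen_subalg scale G"
    and commute: "\<And>g. g \<in> G \<Longrightarrow> y * g = g * y"
  shows "y * z = z * y"
  using z
proof induction
  case (gen x)
  then show ?case by (rule commute)
next
  case (add x z)
  then show ?case by (simp add: distrib_left distrib_right)
next
  case (mult x z)
  then show ?case by (metis mult.assoc)
next
  case (smult x c)
  have "y * scale c x = scale c (y * x)"
    by (simp add: is_K_algebra_scale_mult(2)[OF K])
  also have "\<dots> = scale c (x * y)"
    using smult.IH by simp
  also have "\<dots> = scale c x * y"
    by (rule is_K_algebra_scale_mult(1)[OF K])
  finally show ?case .
qed simp_all

lemma centre_if_commute_generators:
  assumes "is_K_algebra scale" and "gen_subalg scale G = UNIV"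
    and "\<And>g. g \<in> G \<Longrightarrow> y * g = g * y"
  shows "y \<in> centre"
  using gen_subalg_commute[OF assms(1) _ assms(3)] assms(2) unfolding centre_def by blast

lemma ad_eq_0_iff: "ad a f = 0 \<longleftrightarrow> f * a = a * f"
  by (auto simp: ad_def)

lemma two_sided_ideal_ad:
  assumes "two_sided_ideal J" and "x \<in> J"
  shows "ad a x \<in> J"
proof -
  have "a * x \<in> J" and "- (x * a) \<in> J"
    using assms unfolding two_sided_ideal_def by blast+
  then have "a * x + - (x * a) \<in> J"
    using assms(1) unfolding two_sided_ideal_def by blast
  then show ?thesis
    by (simp add: ad_def)
qed

lemma two_sided_ideal_iterated_ad:
  assumes "two_sided_ideal J" and "x \<in> J" and "set ds \<subseteq> ad ` A"
  shows "foldr (\<circ>) ds id x \<in> J"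
  using assms(3)
proof (induction ds)
  case Nil
  then show ?case using assms(2) by simp
next
  case (Cons d ds)
  then obtain a where "d = ad a" by auto
  with Cons show ?case
    using two_sided_ideal_ad[OF assms(1)] by simp
qed

lemma pow_annihilates_0: "pow_annihilates D 0 x \<longleftrightarrow> x = 0"
  by (simp add: pow_annihilates_def)

lemma pow_annihilates_obtain_last_nonzero:
  assumes "pow_annihilates D n x" and "x \<noteq> 0"
  obtains ds where "set ds \<subseteq> D" and "foldr (\<circ>) ds id x \<noteq> 0"
    and "\<And>d. d \<in> D \<Longrightarrow> d (foldr (\<circ>) ds id x) = 0"
proof -
  let ?P = "\<lambda>k. pow_annihilates D k x"
  obtain k where Pk: "?P k" and least: "\<And>m. m < k \<Longrightarrow> \<not> ?P m"
    using assms(1) exists_least_iff[of ?P] by blast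
  have "k \<noteq> 0"
    using Pk assms(2) pow_annihilates_0 by metis
  then obtain m where k: "k = Suc m"
    using not0_implies_Suc by blast
  obtain ds where ds: "length ds = m" "set ds \<subseteq> D" "foldr (\<circ>) ds id x \<noteq> 0"
    using least[of m] k unfolding pow_annihilates_def by blast
  have "d (foldr (\<circ>) ds id x) = 0" if "d \<in> D" for d
  proof -
    have "foldr (\<circ>) (d # ds) id x = 0"
      using Pk ds that unfolding k pow_annihilates_def by (simp del: foldr_Cons)
    then show ?thesis by simp
  qed
  with ds show thesis
    using that by blast
qed

theorem corollary1p9:
  fixes scale :: "'k::field \<Rightarrow> 'a::ring_1 \<Rightarrow> 'a" and G :: "'a set"
  assumes "is_K_algebra scale"
    and "gen_subalg scale G = UNIV"
    and "locally_nilpotent (ad ` G)"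
  shows "\<forall>J::'a set. two_sided_ideal J \<and> J \<noteq> {0} \<longrightarrow> J \<inter> centre \<noteq> {0}"
proof (intro allI impI)
  fix J :: "'a set"
  assume "two_sided_ideal J \<and> J \<noteq> {0}"
  then have J: "two_sided_ideal J" and "J \<noteq> {0}" by auto
  then obtain x where x: "x \<in> J" "x \<noteq> 0"
    unfolding two_sided_ideal_def by auto
  obtain i where "pow_annihilates (ad ` G) (i + 1) x"
    using assms(3) unfolding locally_nilpotent_def by blast
  then obtain ds where ds: "set ds \<subseteq> ad ` G" and y: "foldr (\<circ>) ds id x \<noteq> 0"
    and killed: "\<And>d. d \<in> ad ` G \<Longrightarrow> d (foldr (\<circ>) ds id x) = 0"
    using x(2) by (metis pow_annihilates_obtain_last_nonzero)
  have "foldr (\<circ>) ds id x \<in> J"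
    using two_sided_ideal_iterated_ad[OF J x(1) ds] .
  moreover have "foldr (\<circ>) ds id x \<in> centre"
    using centre_if_commute_generators[OF assms(1,2)] killed[OF imageI]
    by (simp add: ad_eq_0_iff)
  ultimately show "J \<inter> centre \<noteq> {0}"
    using y by blast
qed

end
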